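(* For every cake instance (i.e., $m=0$), the allocation returned by Generalized MES satisfies cake EJR.
   Context: Model: There is a set of agents $N=\{1,\dots,n\}$. The resource $R$ consists of a cake $C=[0,c]$ for a real $c\ge 0$ and a set of indivisible goods $G=\{g_1,\dots,g_m\}$ for an integer $m\ge 0$, with $\max(c,m)>0$. A piece of cake is a union of finitely many disjoint closed subintervals of $C$; its length $\ell(\cdot)$ is the sum of the lengths of its intervals. A bundle $R'=(C',G')$ consists of a piece of cake $C'\subseteq C$ and a set $G'\subseteq G$; its size is $s(R')=\ell(C')+|G'|$. Each agent $i$ approves a bundle $R_i=(C_i,G_i)$, and her utility for a bundle $R'$ is $u_i(R')=\ell(C_i\cap C')+|G_i\cap G'|$. A parameter $\alpha\in(0,c+m]$ is given; an allocation is a bundle $A$ with $s(A)\le\alpha$. A cake instance is one with $m=0$. For a real $t>0$, $N^*\subseteq N$ is $t$-cohesive if $|N^*|\ge t n/\alpha$ and $s(\bigcap_{i\in N^*}R_i)\ge t$. Cake EJR: an allocation $A$ satisfies cake EJR if for every real $t>0$ and every $t$-cohesive group $N^*$, some $j\in N^*$ has $u_j(A)\ge t$. Generalized MES (Method of Equal Shares): Step 1: set $R'=(C',G')=(\emptyset,\emptyset)$ and budgets $b_i=\alpha/n$ for all $i$; agents still present are "remaining". Step 2: divide the remaining cake into intervals $I_1,\dots,I_k$ such that each agent approves each interval entirely or not at all. For an interval $I_j=[x_0,x_1]$, $x\in(x_0,x_1]$ and $\rho\ge 0$, $I_j$ is $(x,\rho)$-affordable if $\sum_{i\in N_{I_j}}\min(b_i,(x-x_0)\rho)=x-x_0$,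 where $N_{I_j}$ is the set of remaining agents approving $I_j$. A remaining good $g$ is $\rho$-affordable if $\sum_{i\in N_g}\min(b_i,\rho)=1$, where $N_g$ is the set of remaining agents approving $g$. Step 3: if no $\rho$-affordable good and no $(x,\rho)$-affordable piece of cake exists for any $\rho$, return $R'$. Otherwise take either an interval $I_j$ with the smallest $\rho$ together with the largest $x$ such that $I_j$ is $(x,\rho)$-affordable, or a good $g$ with the smallest $\rho$ such that $g$ is $\rho$-affordable, whichever has smaller $\rho$. In the first case deduct $\min(b_i,(x-x_0)\rho)$ from $b_i$ for each $i\in N_{I_j}$, remove $[x_0,x]$ from the remaining cake and add it to $C'$; in the second case deduct $\min(b_i,\rho)$ from $b_i$ for each $i\in N_g$, remove $g$ from the remaining goods and add it to $G'$. Remove all agents with zero budget and go to Step 2. *)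

theory Defs
  imports "HOL-Analysis.Analysis"
begin

text \<open>Cake instances (m = 0). Agents are 1..n, the cake is [0,c]; agent i approves
  the piece C i. Lengths are Lebesgue measure.\<close>

definition len :: "real set \<Rightarrow> real" where
  "len S = measure lborel S"

definition is_piece :: "real \<Rightarrow> real set \<Rightarrow> bool" where
  "is_piece c S \<longleftrightarrow> S \<subseteq> {0..c} \<and>
     (\<exists>F. finite F \<and> (\<forall>I\<in>F. \<exists>a b. a \<le> b \<and> I = {a..b}) \<and> pairwise disjnt F \<and> S = \<Union>F)"

definition t_cohesive :: "nat \<Rightarrow> real \<Rightarrow> (nat \<Rightarrow> real set) \<Rightarrow> real \<Rightarrow> nat set \<Rightarrow> bool" where
  "t_cohesive n \<alpha> C t N' \<longleftrightarrow> N' \<subseteq> {1..n} \<and> real (card N') \<ge> t * real n / \<alpha>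
      \<and> len (\<Inter>i\<in>N'. C i) \<ge> t"

definition cake_EJR :: "nat \<Rightarrow> real \<Rightarrow> (nat \<Rightarrow> real set) \<Rightarrow> real set \<Rightarrow> bool" where
  "cake_EJR n \<alpha> C A \<longleftrightarrow>
     (\<forall>t>0. \<forall>N'. t_cohesive n \<alpha> C t N' \<longrightarrow> (\<exists>j\<in>N'. len (C j \<inter> A) \<ge> t))"

text \<open>State: (allocated cake A, budgets b). Remaining cake is {0..c} - A;
  remaining agents are those with positive budget.\<close>

definition remaining :: "nat \<Rightarrow> (nat \<Rightarrow> real) \<Rightarrow> nat set" where
  "remaining n b = {i\<in>{1..n}. b i > 0}"

definition approvers :: "nat \<Rightarrow> (nat \<Rightarrow> real set) \<Rightarrow> (nat \<Rightarrow> real) \<Rightarrow> real \<times> real \<Rightarrow> nat set" where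
  "approvers n C b I = {i\<in>remaining n b. {fst I..snd I} \<subseteq> C i}"

definition valid_division :: "real \<Rightarrow> nat \<Rightarrow> (nat \<Rightarrow> real set) \<Rightarrow> real set \<Rightarrow> (real \<times> real) set \<Rightarrow> bool" where
  "valid_division c n C A D \<longleftrightarrow> finite D
     \<and> (\<forall>I\<in>D. fst I < snd I \<and>
          (\<forall>i\<in>{1..n}. {fst I..snd I} \<subseteq> C i \<or> len ({fst I..snd I} \<inter> C i) = 0))
     \<and> (\<forall>I\<in>D. \<forall>J\<in>D. I \<noteq> J \<longrightarrow> snd I \<le> fst J \<or> snd J \<le> fst I)
     \<and> emeasure lborel ((\<Union>I\<in>D. {fst I..snd I}) - ({0..c} - A)) = 0
     \<and> emeasure lborel (({0..c} - A) - (\<Union>I\<in>D. {fst I..snd I})) = 0"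

definition affordable :: "nat \<Rightarrow> (nat \<Rightarrow> real set) \<Rightarrow> (nat \<Rightarrow> real) \<Rightarrow> real \<times> real \<Rightarrow> real \<Rightarrow> real \<Rightarrow> bool" where
  "affordable n C b I x \<rho> \<longleftrightarrow> fst I < x \<and> x \<le> snd I \<and> \<rho> \<ge> 0 \<and>
     (\<Sum>i\<in>approvers n C b I. min (b i) ((x - fst I) * \<rho>)) = x - fst I"

text \<open>One iteration (Steps 2 and 3, nondeterministic in the division and tie-breaking).\<close>
definition mes_step :: "real \<Rightarrow> nat \<Rightarrow> (nat \<Rightarrow> real set) \<Rightarrow>
    real set \<times> (nat \<Rightarrow> real) \<Rightarrow> real set \<times> (nat \<Rightarrow> real) \<Rightarrow> bool" where
  "mes_step c n C s s' \<longleftrightarrow> (case s of (A, b) \<Rightarrow>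
     \<exists>D I x \<rho>. valid_division c n C A D \<and> I \<in> D \<and> affordable n C b I x \<rho>
       \<and> (\<forall>J\<in>D. \<forall>x' \<rho>'. affordable n C b J x' \<rho>' \<longrightarrow> \<rho> \<le> \<rho>')
       \<and> (\<forall>x'. affordable n C b I x' \<rho> \<longrightarrow> x' \<le> x)
       \<and> s' = (A \<union> {fst I..x},
               (\<lambda>i. if i \<in> approvers n C b I then b i - min (b i) ((x - fst I) * \<rho>) else b i)))"

definition mes_terminal :: "real \<Rightarrow> nat \<Rightarrow> (nat \<Rightarrow> real set) \<Rightarrow> real set \<Rightarrow> (nat \<Rightarrow> real) \<Rightarrow> bool" where
  "mes_terminal c n C A b \<longleftrightarrow>
     (\<exists>D. valid_division c n C A D \<and> (\<forall>I\<in>D. \<forall>x \<rho>. \<not> affordable n C b I x \<rho>))"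

definition mes_output :: "real \<Rightarrow> nat \<Rightarrow> real \<Rightarrow> (nat \<Rightarrow> real set) \<Rightarrow> real set \<Rightarrow> bool" where
  "mes_output c n \<alpha> C A \<longleftrightarrow>
     (\<exists>b. (mes_step c n C)\<^sup>*\<^sup>* ({}, (\<lambda>_. \<alpha> / real n)) (A, b) \<and> mes_terminal c n C A b)"

end

theory Submission
  imports Defs
begin

text \<open>Fix a t-cohesive group N. While no member of N has utility t, every member keeps a
  positive budget, so all of N approve some interval of the current division, and that
  interval is affordable at a price of at most 1/|N|. Hence the chosen price is at most 1/|N|: whenever
  a member of N pays, its payment times |N| is at most the length it gains. A member whose
  budget runs out has therefore gained at least |N| \<alpha>/n \<ge> t; and if no budget runs out,
  the interval approved by all of N is still affordable when the algorithm stops, which is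
  impossible.\<close>

lemma is_piece_compact:
  assumes "is_piece c S"
  shows "compact S"
proof -
  from assms obtain F where "finite F" "\<forall>I\<in>F. \<exists>a b. a \<le> b \<and> I = {a..b}" "S = \<Union>F"
    and "S \<subseteq> {0..c}" unfolding is_piece_def by blast
  then have "closed S" by (auto intro!: closed_Union)
  with \<open>S \<subseteq> {0..c}\<close> show ?thesis
    by (meson bounded_closed_interval bounded_subset compact_eq_bounded_closed)
qed

lemma len_Int_mono:
  fixes P A A' :: "real set"
  assumes "compact P" "closed A" "closed A'" "A \<subseteq> A'"
  shows "len (P \<inter> A) \<le> len (P \<inter> A')"
  unfolding len_def using assms
  by (intro measure_mono_fmeasurable)
    (auto intro: fmeasurable_compact compact_Int_closed borel_closed closed_Int compact_imp_closed)

lemma len_le_of_emeasure_le: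
  fixes K S :: "real set"
  assumes "bounded K" "bounded S" "emeasure lborel K \<le> emeasure lborel S"
  shows "len K \<le> len S"
  using assms emeasure_bounded_finite[OF \<open>bounded K\<close>] emeasure_bounded_finite[OF \<open>bounded S\<close>]
  unfolding len_def by (simp add: emeasure_eq_ennreal_measure)

lemma len_Int_Un_null_interval:
  fixes P A :: "real set"
  assumes "compact P" "closed A" "{a..x} \<subseteq> P" "a \<le> x"
    and "emeasure lborel ({a..x} \<inter> A) = 0"
  shows "len (P \<inter> (A \<union> {a..x})) = len (P \<inter> A) + (x - a)"
proof -
  have split: "P \<inter> (A \<union> {a..x}) = (P \<inter> A) \<union> {a..x}" using assms(3) by auto
  have "emeasure lborel (P \<inter> A \<inter> {a..x}) \<le> emeasure lborel ({a..x} \<inter> A)"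
    using assms(2) by (intro emeasure_mono) auto
  then have "measure lborel (P \<inter> A \<inter> {a..x}) = 0"
    using assms(5) by (simp add: measure_def)
  moreover have "P \<inter> A \<in> fmeasurable lborel"
    using assms by (intro fmeasurable_compact) (simp add: compact_Int_closed)
  ultimately show ?thesis
    unfolding len_def split using measure_Un3[of "P \<inter> A" lborel "{a..x}"] assms(4)
    by (simp add: fmeasurable_compact)
qed

lemma valid_division_Int_allocated_null:
  assumes "valid_division c n C A D" "I \<in> D" "closed A"
  shows "emeasure lborel ({fst I..snd I} \<inter> A) = 0"
proof -
  let ?U = "\<Union>J\<in>D. {fst J..snd J}"
  have "finite D" using assms(1) unfolding valid_division_def by auto
  then have "?U - ({0..c} - A) \<in> sets lborel"
    using assms(3) by (intro sets.Diff borel_closed closed_UN) auto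
  moreover have "{fst I..snd I} \<inter> A \<subseteq> ?U - ({0..c} - A)" using assms(2) by auto
  ultimately have "emeasure lborel ({fst I..snd I} \<inter> A) \<le> emeasure lborel (?U - ({0..c} - A))"
    by (rule emeasure_mono[rotated])
  then show ?thesis using assms(1) unfolding valid_division_def by auto
qed

lemma valid_division_meets:
  fixes K A :: "real set"
  assumes vd: "valid_division c n C A D" and "closed A" "compact K" "K \<subseteq> {0..c}"
    and less: "len (K \<inter> A) < len K"
  shows "\<exists>I\<in>D. emeasure lborel (K \<inter> {fst I..snd I}) \<noteq> 0"
proof (rule ccontr)
  assume null: "\<not> ?thesis"
  let ?V = "\<Union>I\<in>D. K \<inter> {fst I..snd I}"
  let ?R = "({0..c} - A) - (\<Union>I\<in>D. {fst I..snd I})"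
  have fD: "finite D" using vd unfolding valid_division_def by auto
  have closed_K: "closed K" using \<open>compact K\<close> by (rule compact_imp_closed)
  have mKA: "K \<inter> A \<in> sets lborel" and mV: "?V \<in> sets lborel"
    using fD closed_K \<open>closed A\<close> by (auto intro!: borel_closed closed_UN)
  have mR: "?R \<in> sets lborel"
    using fD \<open>closed A\<close> by (intro sets.Diff borel_closed closed_UN) auto
  have "emeasure lborel ?V \<le> (\<Sum>I\<in>D. emeasure lborel (K \<inter> {fst I..snd I}))"
    using fD closed_K by (intro emeasure_subadditive_finite) (auto intro: borel_closed)
  then have V0: "emeasure lborel ?V = 0" using null by simp
  have R0: "emeasure lborel ?R = 0" using vd unfolding valid_division_def by auto
  have "emeasure lborel K \<le> emeasure lborel ((K \<inter> A) \<union> (?V \<union> ?R))"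
    using \<open>K \<subseteq> {0..c}\<close> mKA mV mR by (intro emeasure_mono) auto
  also have "\<dots> \<le> emeasure lborel (K \<inter> A) + (emeasure lborel ?V + emeasure lborel ?R)"
    using mKA mV mR by (intro order.trans[OF emeasure_subadditive] add_left_mono emeasure_subadditive) auto
  finally have "len K \<le> len (K \<inter> A)"
    using V0 R0 \<open>compact K\<close> by (intro len_le_of_emeasure_le) (auto simp: compact_imp_bounded)
  with less show False by simp
qed

lemma valid_division_approved:
  assumes "valid_division c n C A D" "I \<in> D" "i \<in> {1..n}"
    and "emeasure lborel ({fst I..snd I} \<inter> C i) \<noteq> 0"
  shows "{fst I..snd I} \<subseteq> C i"
proof -
  have "emeasure lborel ({fst I..snd I} \<inter> C i) < \<infinity>"
    by (intro emeasure_bounded_finite) auto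
  then have "len ({fst I..snd I} \<inter> C i) \<noteq> 0"
    using assms(4) unfolding len_def by (auto simp: emeasure_eq_ennreal_measure)
  then show ?thesis using assms(1-3) unfolding valid_division_def by blast
qed

lemma cohesive_group_approves_interval:
  assumes vd: "valid_division c n C A D" and "closed A"
    and N: "N \<subseteq> {1..n}" "N \<noteq> {}" and pos: "\<forall>j\<in>N. 0 < b j"
    and pieces: "\<forall>i\<in>{1..n}. is_piece c (C i)"
    and common: "t \<le> len (\<Inter>i\<in>N. C i)"
    and unsatisfied: "\<forall>j\<in>N. len (C j \<inter> A) < t"
  shows "\<exists>J\<in>D. N \<subseteq> approvers n C b J"
proof -
  let ?K = "\<Inter>i\<in>N. C i"
  obtain j where "j \<in> N" using N by auto
  have compact_C: "compact (C i)" if "i \<in> N" for i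
    using that N pieces is_piece_compact by blast
  have "compact ?K" using compact_C N by (intro compact_Inter) auto
  have "C j \<subseteq> {0..c}" using \<open>j \<in> N\<close> N pieces unfolding is_piece_def by auto
  then have "?K \<subseteq> {0..c}" using \<open>j \<in> N\<close> by auto
  have "len (?K \<inter> A) \<le> len (C j \<inter> A)"
    using \<open>j \<in> N\<close> compact_C[OF \<open>j \<in> N\<close>] \<open>closed A\<close> \<open>compact ?K\<close> unfolding len_def
    by (intro measure_mono_fmeasurable)
      (auto intro: fmeasurable_compact compact_Int_closed borel_closed compact_imp_closed)
  also have "\<dots> < t" using unsatisfied \<open>j \<in> N\<close> by blast
  finally have "len (?K \<inter> A) < len ?K" using common by linarith
  then obtain J where "J \<in> D" and J: "emeasure lborel (?K \<inter> {fst J..snd J}) \<noteq> 0"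
    using valid_division_meets[OF vd \<open>closed A\<close> \<open>compact ?K\<close> \<open>?K \<subseteq> {0..c}\<close>] by blast
  have "{fst J..snd J} \<subseteq> C i" if "i \<in> N" for i
  proof (rule valid_division_approved[OF vd \<open>J \<in> D\<close>])
    have "emeasure lborel (?K \<inter> {fst J..snd J}) \<le> emeasure lborel ({fst J..snd J} \<inter> C i)"
      using that compact_C[OF that] by (intro emeasure_mono) (auto intro: borel_closed compact_imp_closed)
    with J show "emeasure lborel ({fst J..snd J} \<inter> C i) \<noteq> 0" by (auto simp: bot_unique)
  qed (use that N in auto)
  then have "N \<subseteq> approvers n C b J"
    using N pos unfolding approvers_def remaining_def by auto
  with \<open>J \<in> D\<close> show ?thesis by blast
qed

lemma approvers_finite: "finite (approvers n C b J)"
  unfolding approvers_def remaining_def by auto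

text \<open>Equal cost sharing: at price 1/k every approver pays d/k, which no budget refuses
  while d \<le> k \<cdot> min budget.\<close>
lemma affordable_equal_split:
  assumes S: "S = approvers n C b J" "S \<noteq> {}" and "fst J < snd J"
  shows "affordable n C b J (fst J + min (snd J - fst J) (real (card S) * Min (b ` S)))
           (1 / real (card S))"
proof -
  have "finite S" using S approvers_finite by blast
  have pos: "\<forall>i\<in>S. 0 < b i" using S unfolding approvers_def remaining_def by auto
  define m where "m = Min (b ` S)"
  define k where "k = real (card S)"
  define d where "d = min (snd J - fst J) (k * m)"
  have "0 < m" unfolding m_def using \<open>finite S\<close> S pos by (subst Min_gr_iff) auto
  have m_le: "m \<le> b i" if "i \<in> S" for i unfolding m_def using \<open>finite S\<close> that by auto
  have "0 < k" unfolding k_def using \<open>finite S\<close> S by (simp add: card_gt_0_iff)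
  have "0 < d" unfolding d_def using \<open>0 < k\<close> \<open>0 < m\<close> \<open>fst J < snd J\<close> by auto
  have "d / k \<le> m" unfolding d_def using \<open>0 < k\<close> by (simp add: divide_le_eq mult.commute)
  have "(\<Sum>i\<in>S. min (b i) (d * (1 / k))) = (\<Sum>i\<in>S. d / k)"
  proof (rule sum.cong[OF refl])
    fix i assume "i \<in> S"
    then have "d / k \<le> b i" using \<open>d / k \<le> m\<close> m_le[of i] by linarith
    then show "min (b i) (d * (1 / k)) = d / k" by (simp add: min_def)
  qed
  also have "\<dots> = d" using \<open>0 < k\<close> unfolding k_def by simp
  finally show ?thesis
    unfolding affordable_def using \<open>0 < d\<close> S(1)
    unfolding d_def k_def m_def by (auto simp: min_def)
qed

lemma minimal_price_le_inverse_card: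
  assumes vd: "valid_division c n C A D"
    and minimal: "\<forall>J\<in>D. \<forall>x' \<rho>'. affordable n C b J x' \<rho>' \<longrightarrow> \<rho> \<le> \<rho>'"
    and "J \<in> D" "N \<subseteq> approvers n C b J" "N \<noteq> {}"
  shows "\<rho> * real (card N) \<le> 1"
proof -
  define S where "S = approvers n C b J"
  have "finite S" unfolding S_def by (rule approvers_finite)
  have "S \<noteq> {}" using assms(4,5) unfolding S_def by auto
  have "0 < card N" using assms(4,5) \<open>finite S\<close> S_def by (auto simp: card_gt_0_iff finite_subset)
  have "card N \<le> card S" using assms(4) \<open>finite S\<close> S_def by (simp add: card_mono)
  have "fst J < snd J" using vd \<open>J \<in> D\<close> unfolding valid_division_def by auto
  then have "\<rho> \<le> 1 / real (card S)"
    using minimal \<open>J \<in> D\<close> affordable_equal_split[OF S_def \<open>S \<noteq> {}\<close>] by blast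
  also have "\<dots> \<le> 1 / real (card N)"
    using \<open>0 < card N\<close> \<open>card N \<le> card S\<close> by (intro divide_left_mono) auto
  finally show ?thesis using \<open>0 < card N\<close> by (simp add: le_divide_eq)
qed

definition ejr_invariant ::
    "nat \<Rightarrow> real \<Rightarrow> (nat \<Rightarrow> real set) \<Rightarrow> real \<Rightarrow> nat set \<Rightarrow> real set \<Rightarrow> (nat \<Rightarrow> real) \<Rightarrow> bool" where
  "ejr_invariant n \<alpha> C t N A b \<longleftrightarrow> closed A \<and> ((\<exists>j\<in>N. t \<le> len (C j \<inter> A)) \<or>
     (\<forall>j\<in>N. 0 < b j \<and> (\<alpha> / real n - b j) * real (card N) \<le> len (C j \<inter> A)))"

lemma valid_division_len_gain:
  fixes P A :: "real set"
  assumes "valid_division c n C A D" "I \<in> D" "closed A" "compact P"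
    and "{fst I..x} \<subseteq> P" "fst I \<le> x" "x \<le> snd I"
  shows "len (P \<inter> (A \<union> {fst I..x})) = len (P \<inter> A) + (x - fst I)"
proof (rule len_Int_Un_null_interval)
  have "emeasure lborel ({fst I..x} \<inter> A) \<le> emeasure lborel ({fst I..snd I} \<inter> A)"
    using \<open>closed A\<close> \<open>x \<le> snd I\<close> by (intro emeasure_mono) auto
  then show "emeasure lborel ({fst I..x} \<inter> A) = 0"
    using valid_division_Int_allocated_null[OF assms(1-3)] by simp
qed (use assms in auto)

lemma mes_step_adds_interval:
  assumes "mes_step c n C (A, b) (A', b')"
  obtains a x where "A' = A \<union> {a..x}"
  using assms unfolding mes_step_def by auto

lemma mes_step_budget_nonneg:
  assumes "mes_step c n C (A, b) (A', b')" "0 \<le> b i"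
  shows "0 \<le> b' i"
  using assms unfolding mes_step_def by auto

text \<open>All of N approve some interval affordable at price 1/|N|, so the cheapest price is at
  most 1/|N|, and a member of N paying at that price for a length d pays at most d/|N|.\<close>
lemma mes_step_payment_le_gain:
  assumes step: "mes_step c n C (A, b) (A', b')" and "closed A"
    and N: "N \<subseteq> {1..n}" "N \<noteq> {}" and pos: "\<forall>j\<in>N. 0 < b j"
    and pieces: "\<forall>i\<in>{1..n}. is_piece c (C i)"
    and common: "t \<le> len (\<Inter>i\<in>N. C i)"
    and unsatisfied: "\<forall>j\<in>N. len (C j \<inter> A) < t"
    and "j \<in> N"
  shows "(b j - b' j) * real (card N) \<le> len (C j \<inter> A') - len (C j \<inter> A)"
proof -
  from step obtain D I x \<rho> where vd: "valid_division c n C A D" and "I \<in> D"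
    and af: "affordable n C b I x \<rho>"
    and minimal: "\<forall>J\<in>D. \<forall>x' \<rho>'. affordable n C b J x' \<rho>' \<longrightarrow> \<rho> \<le> \<rho>'"
    and A': "A' = A \<union> {fst I..x}"
    and b': "b' = (\<lambda>i. if i \<in> approvers n C b I then b i - min (b i) ((x - fst I) * \<rho>) else b i)"
    unfolding mes_step_def by auto
  have "compact (C j)" using \<open>j \<in> N\<close> N pieces is_piece_compact by blast
  show ?thesis
  proof (cases "j \<in> approvers n C b I")
    case True
    obtain J where "J \<in> D" "N \<subseteq> approvers n C b J"
      using cohesive_group_approves_interval[OF vd \<open>closed A\<close> N pos pieces common unsatisfied]
      by blast
    then have price: "\<rho> * real (card N) \<le> 1"
      using minimal_price_le_inverse_card[OF vd minimal _ _ \<open>N \<noteq> {}\<close>] by blast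
    define d where "d = x - fst I"
    have "0 < d" "x \<le> snd I" "0 \<le> \<rho>" using af unfolding affordable_def d_def by auto
    have "{fst I..x} \<subseteq> C j" using True \<open>x \<le> snd I\<close> unfolding approvers_def by auto
    then have "len (C j \<inter> A') = len (C j \<inter> A) + d"
      unfolding A' d_def using \<open>0 < d\<close> \<open>x \<le> snd I\<close>
      by (intro valid_division_len_gain[OF vd \<open>I \<in> D\<close> \<open>closed A\<close> \<open>compact (C j)\<close>])
        (auto simp: d_def)
    moreover have "b j - b' j \<le> d * \<rho>" using True b' unfolding d_def by auto
    then have "(b j - b' j) * real (card N) \<le> d * (\<rho> * real (card N))"
      by (simp add: mult.assoc[symmetric] mult_right_mono)
    moreover have "d * (\<rho> * real (card N)) \<le> d" using price \<open>0 < d\<close> by simp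
    ultimately show ?thesis by simp
  next
    case False
    have "len (C j \<inter> A) \<le> len (C j \<inter> A')"
      using \<open>closed A\<close> A' by (intro len_Int_mono[OF \<open>compact (C j)\<close>]) auto
    with False show ?thesis using b' by simp
  qed
qed

lemma ejr_invariant_step:
  assumes step: "mes_step c n C (A, b) (A', b')"
    and inv: "ejr_invariant n \<alpha> C t N A b"
    and N: "N \<subseteq> {1..n}" "N \<noteq> {}"
    and pieces: "\<forall>i\<in>{1..n}. is_piece c (C i)"
    and common: "t \<le> len (\<Inter>i\<in>N. C i)"
    and share: "t \<le> \<alpha> / real n * real (card N)"
  shows "ejr_invariant n \<alpha> C t N A' b'"
proof -
  obtain a x where A': "A' = A \<union> {a..x}" using mes_step_adds_interval[OF step] .
  have "closed A" using inv unfolding ejr_invariant_def by auto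
  then have "closed A'" using A' by auto
  show ?thesis
  proof (cases "\<exists>j\<in>N. t \<le> len (C j \<inter> A)")
    case True
    then obtain j where "j \<in> N" "t \<le> len (C j \<inter> A)" by blast
    moreover have "compact (C j)" using \<open>j \<in> N\<close> N pieces is_piece_compact by blast
    then have "len (C j \<inter> A) \<le> len (C j \<inter> A')"
      using \<open>closed A\<close> \<open>closed A'\<close> A' by (intro len_Int_mono) auto
    ultimately have "t \<le> len (C j \<inter> A')" by linarith
    with \<open>j \<in> N\<close> \<open>closed A'\<close> show ?thesis
      unfolding ejr_invariant_def by (intro conjI disjI1 bexI)
  next
    case False
    then have unsatisfied: "\<forall>j\<in>N. len (C j \<inter> A) < t" by auto
    have paid: "\<forall>j\<in>N. 0 < b j \<and> (\<alpha> / real n - b j) * real (card N) \<le> len (C j \<inter> A)"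
      using inv False unfolding ejr_invariant_def by auto
    have spent: "(\<alpha> / real n - b' j) * real (card N) \<le> len (C j \<inter> A')" if "j \<in> N" for j
    proof -
      have "(\<alpha> / real n - b j) * real (card N) \<le> len (C j \<inter> A)" using paid that by blast
      moreover have "(b j - b' j) * real (card N) \<le> len (C j \<inter> A') - len (C j \<inter> A)"
        using paid by (intro mes_step_payment_le_gain[OF step \<open>closed A\<close> N _ pieces common unsatisfied that]) auto
      ultimately show ?thesis by (simp add: algebra_simps)
    qed
    show ?thesis
    proof (cases "\<forall>j\<in>N. 0 < b' j")
      case True
      with spent \<open>closed A'\<close> show ?thesis
        unfolding ejr_invariant_def by (intro conjI disjI2 ballI) auto
    next
      case False
      then obtain j where "j \<in> N" "b' j \<le> 0" by auto
      moreover have "0 \<le> b' j" using mes_step_budget_nonneg[OF step] paid \<open>j \<in> N\<close> by auto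
      ultimately have "t \<le> len (C j \<inter> A')" using spent[of j] share by (simp add: mult.commute)
      with \<open>j \<in> N\<close> \<open>closed A'\<close> show ?thesis
        unfolding ejr_invariant_def by (intro conjI disjI1 bexI)
    qed
  qed
qed

lemma ejr_invariant_reachable:
  assumes "(mes_step c n C)\<^sup>*\<^sup>* ({}, \<lambda>_. \<alpha> / real n) (A, b)"
    and "0 < n" "0 < \<alpha>"
    and N: "N \<subseteq> {1..n}" "N \<noteq> {}"
    and pieces: "\<forall>i\<in>{1..n}. is_piece c (C i)"
    and common: "t \<le> len (\<Inter>i\<in>N. C i)"
    and share: "t \<le> \<alpha> / real n * real (card N)"
  shows "ejr_invariant n \<alpha> C t N A b"
  using assms(1)
proof (induction "(A, b)" arbitrary: A b rule: rtranclp_induct)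
  case base
  then show ?case using assms(2,3) unfolding ejr_invariant_def by (simp add: len_def)
next
  case (step s)
  then show ?case
    using ejr_invariant_step[OF _ _ N pieces common share] by (metis surj_pair)
qed

lemma ejr_invariant_terminal:
  assumes "mes_terminal c n C A b" "ejr_invariant n \<alpha> C t N A b"
    and N: "N \<subseteq> {1..n}" "N \<noteq> {}"
    and pieces: "\<forall>i\<in>{1..n}. is_piece c (C i)"
    and common: "t \<le> len (\<Inter>i\<in>N. C i)"
  shows "\<exists>j\<in>N. t \<le> len (C j \<inter> A)"
proof (rule ccontr)
  assume unsatisfied: "\<not> ?thesis"
  then have "\<forall>j\<in>N. 0 < b j" and "closed A"
    using assms(2) unfolding ejr_invariant_def by auto
  from assms(1) obtain D where vd: "valid_division c n C A D"
    and none: "\<forall>I\<in>D. \<forall>x \<rho>. \<not> affordable n C b I x \<rho>" unfolding mes_terminal_def by auto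
  obtain J where "J \<in> D" "N \<subseteq> approvers n C b J"
    using cohesive_group_approves_interval[OF vd \<open>closed A\<close> N \<open>\<forall>j\<in>N. 0 < b j\<close> pieces common]
      unsatisfied by fastforce
  moreover have "fst J < snd J" using vd \<open>J \<in> D\<close> unfolding valid_division_def by auto
  ultimately show False
    using none affordable_equal_split[OF refl, of n C b J] N by blast
qed

theorem mainTheorem8:
  fixes n :: nat and c \<alpha> :: real and C :: "nat \<Rightarrow> real set" and A :: "real set"
  assumes "n \<ge> 1" and "c > 0" and "0 < \<alpha>" and "\<alpha> \<le> c"
    and "\<forall>i\<in>{1..n}. is_piece c (C i)"
    and "mes_output c n \<alpha> C A"
  shows "cake_EJR n \<alpha> C A"
  unfolding cake_EJR_def
proof (intro allI impI)
  fix t N assume "0 < t" and "t_cohesive n \<alpha> C t N"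
  then have N: "N \<subseteq> {1..n}" and size: "t * real n / \<alpha> \<le> real (card N)"
    and common: "t \<le> len (\<Inter>i\<in>N. C i)" unfolding t_cohesive_def by auto
  have "0 < t * real n / \<alpha>" using \<open>0 < t\<close> assms(1,3) by simp
  with size have "N \<noteq> {}" by auto
  have share: "t \<le> \<alpha> / real n * real (card N)"
    using size assms(1,3) by (simp add: field_simps)
  from assms(6) obtain b where run: "(mes_step c n C)\<^sup>*\<^sup>* ({}, \<lambda>_. \<alpha> / real n) (A, b)"
    and stop: "mes_terminal c n C A b" unfolding mes_output_def by auto
  have "ejr_invariant n \<alpha> C t N A b"
    using ejr_invariant_reachable[OF run _ \<open>0 < \<alpha>\<close> N \<open>N \<noteq> {}\<close> assms(5) common share] assms(1)
    by simp
  from ejr_invariant_terminal[OF stop this N \<open>N \<noteq> {}\<close> assms(5) common]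
  show "\<exists>j\<in>N. t \<le> len (C j \<inter> A)" .
qed

end
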